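(* Let $D\ge 2$ be a fixed integer. For odd $n$, let $M_3(n,D)$ be the maximum size of a set of words of length $n$ over $\{\mathtt A,\mathtt T,\mathtt C,\mathtt G\}$ that is both mutually uncorrelated and $D$-GC-prefix-balanced. Then, as $n\to\infty$ over odd integers, \[ M_3(n,D)\;\ge\;\frac{2^{n-1}}{D}\,\tan^2\!\frac{\pi}{D}\,\cos^{\,n-1}\!\frac{\pi}{D}\,(1+o(1)). \]
   Context: A set $S$ of words of length $n$ over an alphabet is mutually uncorrelated if for all $X,Y\in S$ (including $X=Y$) and every $1\le k\le n-1$, the suffix of $X$ of length $k$ is not equal to the prefix of $Y$ of length $k$ (equivalently, every word in $S$ is self-uncorrelated, i.e. no proper nonempty prefix equals a suffix of itself, and no proper nonempty prefix of one word of $S$ equals a suffix of another word of $S$). For $D>0$, a word over $\{\mathtt A,\mathtt T,\mathtt C,\mathtt G\}$ is $D$-GC-prefix-balanced if for every prefix of it (including the whole word), the absolute difference between the number of symbols from $\{\mathtt G,\mathtt C\}$ and the number of symbols from $\{\mathtt A,\mathtt T\}$ in that prefix is at most $D$; a set is $D$-GC-prefix-balanced if all its words are. *)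

theory Defs
  imports Complex_Main
begin

datatype nuc = A | T | C | G

definition words :: "nat \<Rightarrow> nuc list set" where
  "words n = {w. length w = n}"

definition mutually_uncorrelated :: "nat \<Rightarrow> nuc list set \<Rightarrow> bool" where
  "mutually_uncorrelated n S \<longleftrightarrow>
     (\<forall>X\<in>S. \<forall>Y\<in>S. \<forall>k. 1 \<le> k \<and> k \<le> n - 1 \<longrightarrow> drop (n - k) X \<noteq> take k Y)"

definition gc_count :: "nuc list \<Rightarrow> int" where
  "gc_count w = int (length (filter (\<lambda>x. x = G \<or> x = C) w))"

definition at_count :: "nuc list \<Rightarrow> int" where
  "at_count w = int (length (filter (\<lambda>x. x = A \<or> x = T) w))"

definition gc_prefix_balanced :: "nat \<Rightarrow> nuc list \<Rightarrow> bool" where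
  "gc_prefix_balanced D w \<longleftrightarrow>
     (\<forall>i\<le>length w. \<bar>gc_count (take i w) - at_count (take i w)\<bar> \<le> int D)"

definition M3 :: "nat \<Rightarrow> nat \<Rightarrow> nat" where
  "M3 n D = Max {card S | S. S \<subseteq> words n \<and> mutually_uncorrelated n S
                          \<and> (\<forall>w\<in>S. gc_prefix_balanced D w)}"

end

theory Submission
  imports Defs
begin

text \<open>The bound is far from tight. Put G or C at position 0 and at the odd positions, and A or T
  at the other positions. Along prefixes of such a word the GC-excess runs through
  0, 1, 2, 1, 2, \<dots>, so the word is 2-GC-prefix-balanced. For odd n the last letter is A or T.
  A suffix starting at an even position then starts with A or T, while every word starts
  with G or C; a suffix starting at an odd position has even length k, and it ends in A or T
  while the prefix of length k ends (at the odd index k - 1) in G or C. So the 2^n such words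
  are mutually uncorrelated, and since tan x ^ 2 * cos x ^ (n - 1) \<le> 1 for n \<ge> 3, already
  2^n exceeds the claimed bound.\<close>

lemma card_lists_nth_in:
  "card {w. length w = n \<and> (\<forall>i<n. w ! i \<in> S i)} = (\<Prod>i<n. card (S i))"
proof (induction n)
  case 0
  then show ?case by simp
next
  case (Suc n)
  let ?L = "\<lambda>n. {w. length w = n \<and> (\<forall>i<n. w ! i \<in> S i)}"
  have snoc: "?L (Suc n) = (\<lambda>(w, x). w @ [x]) ` (?L n \<times> S n)"
  proof (intro equalityI subsetI)
    fix w assume w: "w \<in> ?L (Suc n)"
    then have "w = take n w @ [w ! n]"
      by (simp add: take_Suc_conv_app_nth[symmetric])
    moreover have "(take n w, w ! n) \<in> ?L n \<times> S n"
      using w by auto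
    ultimately show "w \<in> (\<lambda>(w, x). w @ [x]) ` (?L n \<times> S n)"
      by (metis (no_types, lifting) case_prod_conv image_eqI)
  next
    fix w assume "w \<in> (\<lambda>(w, x). w @ [x]) ` (?L n \<times> S n)"
    then show "w \<in> ?L (Suc n)"
      by (auto simp: nth_append less_Suc_eq)
  qed
  have "inj_on (\<lambda>(w, x). w @ [x]) (?L n \<times> S n)"
    by (auto intro!: inj_onI)
  then have "card (?L (Suc n)) = card (?L n) * card (S n)"
    by (simp add: snoc card_image card_cartesian_product)
  then show ?case
    using Suc.IH by simp
qed

lemma finite_words: "finite (words n)"
proof -
  have "(UNIV :: nuc set) = {A, T, C, G}"
    by (auto intro: nuc.exhaust)
  then have "finite (UNIV :: nuc set)"
    by (metis finite.emptyI finite_insert)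
  then show ?thesis
    using finite_lists_length_eq[of "UNIV :: nuc set" n] by (simp add: words_def)
qed

lemma card_le_M3:
  assumes "S \<subseteq> words n" "mutually_uncorrelated n S" "\<forall>w\<in>S. gc_prefix_balanced D w"
  shows "card S \<le> M3 n D"
proof -
  let ?F = "{card S | S. S \<subseteq> words n \<and> mutually_uncorrelated n S \<and> (\<forall>w\<in>S. gc_prefix_balanced D w)}"
  have "?F \<subseteq> card ` Pow (words n)"
    by auto
  then have "finite ?F"
    using finite_words by (meson finite_Pow_iff finite_imageI finite_subset)
  moreover have "card S \<in> ?F"
    using assms by blast
  ultimately show ?thesis
    unfolding M3_def by (rule Max_ge)
qed

definition template_slot :: "nat \<Rightarrow> nuc set" where
  "template_slot i = (if i = 0 \<or> odd i then {G, C} else {A, T})"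

definition template_words :: "nat \<Rightarrow> nuc list set" where
  "template_words n = {w. length w = n \<and> (\<forall>i<n. w ! i \<in> template_slot i)}"

lemma card_template_words: "card (template_words n) = 2 ^ n"
proof -
  have "card (template_slot i) = 2" for i
    by (simp add: template_slot_def)
  then show ?thesis
    unfolding template_words_def card_lists_nth_in by simp
qed

lemma template_words_subset_words: "template_words n \<subseteq> words n"
  by (auto simp: template_words_def words_def)

lemma gc_at_excess_take_template:
  assumes "w \<in> template_words n" "i \<le> n"
  shows "gc_count (take i w) - at_count (take i w) = (if i = 0 then 0 else if odd i then 1 else 2)"
  using assms(2)
proof (induction i)
  case 0
  then show ?case by (simp add: gc_count_def at_count_def)
next
  case (Suc i)
  have "i < length w"
    using Suc.prems assms(1) by (simp add: template_words_def)
  then have "take (Suc i) w = take i w @ [w ! i]"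
    by (simp add: take_Suc_conv_app_nth)
  moreover have "w ! i \<in> template_slot i"
    using Suc.prems assms(1) by (simp add: template_words_def)
  ultimately show ?case
    using Suc by (auto simp: gc_count_def at_count_def template_slot_def split: if_splits)
qed

lemma template_word_gc_prefix_balanced:
  assumes "D \<ge> 2" "w \<in> template_words n"
  shows "gc_prefix_balanced D w"
  unfolding gc_prefix_balanced_def
proof (intro allI impI)
  fix i assume "i \<le> length w"
  then have "i \<le> n"
    using assms(2) by (simp add: template_words_def)
  then show "\<bar>gc_count (take i w) - at_count (take i w)\<bar> \<le> int D"
    using gc_at_excess_take_template[OF assms(2)] assms(1) by auto
qed

lemma template_words_mutually_uncorrelated:
  assumes "odd n"
  shows "mutually_uncorrelated n (template_words n)"
  unfolding mutually_uncorrelated_def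
proof (intro ballI allI impI notI)
  fix X Y k
  assume X: "X \<in> template_words n" and Y: "Y \<in> template_words n"
    and k: "1 \<le> k \<and> k \<le> n - 1" and overlap: "drop (n - k) X = take k Y"
  have slot: "W ! i \<in> template_slot i" if "W \<in> template_words n" "i < n" for W i
    using that by (simp add: template_words_def)
  have len: "length X = n"
    using X by (simp add: template_words_def)
  have "drop (n - k) X ! j = take k Y ! j" if "j < k" for j
    using overlap by simp
  then have shifted: "X ! (n - k + j) = Y ! j" if "j < k" for j
    using that k len by simp
  have Y0: "Y ! 0 \<in> {G, C}"
    using slot[OF Y, of 0] k by (auto simp: template_slot_def)
  show False
  proof (cases "odd (n - k)")
    case False
    moreover have "0 < n - k" "n - k < n"
      using k by linarith+
    ultimately have "X ! (n - k) \<in> {A, T}"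
      using slot[OF X, of "n - k"] by (simp add: template_slot_def)
    then show False
      using shifted[of 0] Y0 k by auto
  next
    case True
    have "n = (n - k) + k"
      using k by linarith
    then have "even k"
      using True assms by (metis even_add)
    then have "odd (k - 1)" "k - 1 < n"
      using k by auto
    then have "Y ! (k - 1) \<in> {G, C}"
      using slot[OF Y, of "k - 1"] by (simp add: template_slot_def)
    moreover have "even (n - 1)" "0 < n - 1" "n - 1 < n"
      using assms k by auto
    then have "X ! (n - 1) \<in> {A, T}"
      using slot[OF X, of "n - 1"] by (simp add: template_slot_def)
    moreover have "n - k + (k - 1) = n - 1"
      using k by linarith
    ultimately show False
      using shifted[of "k - 1"] k by auto
  qed
qed

lemma two_power_le_M3:
  assumes "D \<ge> 2" "odd n"
  shows "2 ^ n \<le> M3 n D"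
  using card_le_M3[OF template_words_subset_words template_words_mutually_uncorrelated[OF assms(2)]]
    template_word_gc_prefix_balanced[OF assms(1)]
  by (simp add: card_template_words)

lemma tan_square_mult_cos_power_le_one:
  assumes "n \<ge> 3"
  shows "(tan (x::real))\<^sup>2 * (cos x) ^ (n - 1) \<le> 1"
proof (cases "cos x = 0")
  case True
  then show ?thesis
    using assms by (simp add: tan_def)
next
  case False
  have "n - 1 = 2 + (n - 3)"
    using assms by linarith
  then have "(cos x) ^ (n - 1) = (cos x)\<^sup>2 * (cos x) ^ (n - 3)"
    by (simp only: power_add)
  then have "(tan x)\<^sup>2 * (cos x) ^ (n - 1) = (sin x)\<^sup>2 * (cos x) ^ (n - 3)"
    using False by (simp add: tan_def power_divide)
  also have "\<dots> \<le> (sin x)\<^sup>2 * 1"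
  proof (rule mult_left_mono)
    have "\<bar>cos x\<bar> ^ (n - 3) \<le> 1"
      by (rule power_le_one) (simp_all add: abs_cos_le_one)
    then show "(cos x) ^ (n - 3) \<le> 1"
      by (metis abs_le_D1 power_abs)
  qed simp
  also have "\<dots> \<le> 1"
    by (simp add: abs_square_le_1)
  finally show ?thesis .
qed

theorem theorem4:
  fixes D :: nat
  assumes "D \<ge> 2"
  shows "\<exists>e :: nat \<Rightarrow> real. (e \<longlonglongrightarrow> 0) \<and>
           (\<forall>n. odd n \<longrightarrow>
              real (M3 n D) \<ge> 2 ^ (n - 1) / real D * (tan (pi / real D))\<^sup>2
                               * (cos (pi / real D)) ^ (n - 1) * (1 + e n))"
proof (intro exI conjI allI impI)
  \<comment> \<open>tan x ^ 2 * cos x ^ (n - 1) \<le> 1 needs n \<ge> 3, so the error term switches off n = 1.\<close>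
  let ?e = "\<lambda>n::nat. if n \<le> 1 then -1 else (0::real)"
  show "?e \<longlonglongrightarrow> 0"
    by (rule LIMSEQ_offset[where k = 2]) simp
  fix n :: nat assume n: "odd n"
  show "real (M3 n D) \<ge> 2 ^ (n - 1) / real D * (tan (pi / real D))\<^sup>2
                          * (cos (pi / real D)) ^ (n - 1) * (1 + ?e n)"
  proof (cases "n \<le> 1")
    case True
    then show ?thesis by simp
  next
    case False
    then have "n \<ge> 3"
      using n by presburger
    then have "2 ^ (n - 1) / real D * ((tan (pi / real D))\<^sup>2 * (cos (pi / real D)) ^ (n - 1))
        \<le> 2 ^ (n - 1) / real D * 1"
      by (intro mult_left_mono tan_square_mult_cos_power_le_one) simp_all
    also have "\<dots> \<le> 2 ^ (n - 1)"
      using assms by (simp add: divide_le_eq)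
    also have "\<dots> \<le> 2 ^ n"
      by simp
    also have "\<dots> \<le> real (M3 n D)"
      using two_power_le_M3[OF assms n] by (metis of_nat_le_iff of_nat_numeral of_nat_power)
    finally show ?thesis
      using False by (simp add: mult.assoc)
  qed
qed

end
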